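(* Let $G$ be a group and let $\mathbf{A}=(A,\mu,\alpha)$ and $\mathbf{B}=(B,\nu,\beta)$ be dynamical systems. Let $\omega$ be a state on $A\odot B$ such that $\omega(a\otimes 1_B)=\mu(a)$ and $\omega(1_A\otimes b)=\nu(b)$ for all $a\in A$, $b\in B$. Then $\omega$ is a joining of $\mathbf{A}$ and $\mathbf{B}$ if and only if $P_\omega U_g=V_gP_\omega$ for all $g\in G$, where $P_\omega$, $U_g$, $V_g$ are as defined in the context.
   Context: A dynamical system $\mathbf{A}=(A,\mu,\alpha)$ consists of a $\sigma$-finite von Neumann algebra $A$, a faithful normal state $\mu$ on $A$, and a representation $\alpha:G\to\mathrm{Aut}(A)$, $g\mapsto\alpha_g$, of $G$ as $\ast$-automorphisms of $A$ with $\mu\circ\alpha_g=\mu$ for all $g$. $A\odot B$ denotes the algebraic tensor product (a unital $\ast$-algebra). A joining of $\mathbf{A}$ and $\mathbf{B}$ is a state $\omega$ on $A\odot B$ with $\omega(a\otimes 1_B)=\mu(a)$, $\omega(1_A\otimes b)=\nu(b)$ and $\omega\circ(\alpha_g\otimes\beta_g)=\omega$ for all $a\in A$, $b\in B$, $g\in G$. Given $\omega$ as in the claim, let $(H_\omega,\gamma_\omega)$ be its GNS construction: $H_\omega$ is a Hilbert space and $\gamma_\omega:A\odot B\to H_\omega$ is linear with dense range and $\langle\gamma_\omega(s),\gamma_\omega(t)\rangle=\omega(s^*t)$. Let $\gamma_\mu(a)=\gamma_\omega(a\otimes 1_B)$, $\gamma_\nu(b)=\gamma_\omega(1_A\otimes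 b)$, and let $H_\mu$, $H_\nu$ be the closures in $H_\omega$ of $\gamma_\mu(A)$ and $\gamma_\nu(B)$. Let $P$ be the orthogonal projection of $H_\omega$ onto $H_\nu$ and $P_\omega:=P|_{H_\mu}:H_\mu\to H_\nu$ (the conditional expectation operator associated with $\omega$). Let $U_g:H_\mu\to H_\mu$ and $V_g:H_\nu\to H_\nu$ be the unitary operators determined by $U_g\gamma_\mu(a)=\gamma_\mu(\alpha_g(a))$ and $V_g\gamma_\nu(b)=\gamma_\nu(\beta_g(b))$. *)

theory Defs
  imports "HOL-Analysis.Analysis" "HOL-Algebra.Group"
begin

class cvec = ab_group_add +
  fixes scaleC :: "complex \<Rightarrow> 'a \<Rightarrow> 'a" (infixr \<open>*\<^sub>C\<close> 75)
  assumes scaleC_add_right: "c *\<^sub>C (x + y) = c *\<^sub>C x + c *\<^sub>C y"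
    and scaleC_add_left: "(c + d) *\<^sub>C x = c *\<^sub>C x + d *\<^sub>C x"
    and scaleC_scaleC: "c *\<^sub>C (d *\<^sub>C x) = (c * d) *\<^sub>C x"
    and scaleC_one: "1 *\<^sub>C x = x"

class star_algebra = cvec + ring_1 +
  fixes star :: "'a \<Rightarrow> 'a"
  assumes scaleC_mult_left: "(c *\<^sub>C x) * y = c *\<^sub>C (x * y)"
    and scaleC_mult_right: "x * (c *\<^sub>C y) = c *\<^sub>C (x * y)"
    and star_star: "star (star x) = x"
    and star_add: "star (x + y) = star x + star y"
    and star_mult: "star (x * y) = star y * star x"
    and star_scaleC: "star (c *\<^sub>C x) = cnj c *\<^sub>C star x"

class cinner_space = cvec + real_normed_vector +
  fixes cinner :: "'a \<Rightarrow> 'a \<Rightarrow> complex"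
  assumes scaleR_scaleC: "scaleR r x = complex_of_real r *\<^sub>C x"
    and cinner_add_right: "cinner x (y + z) = cinner x y + cinner x z"
    and cinner_scaleC_right: "cinner x (c *\<^sub>C y) = c * cinner x y"
    and cinner_commute: "cinner y x = cnj (cinner x y)"
    and cinner_self_nonneg: "cinner x x \<in> \<real> \<and> Re (cinner x x) \<ge> 0"
    and norm_cinner: "norm x = sqrt (Re (cinner x x))"

class chilbert = cinner_space + complete_space

definition clinear :: "('a::cvec \<Rightarrow> 'b::cvec) \<Rightarrow> bool" where
  "clinear f \<longleftrightarrow> (\<forall>x y. f (x + y) = f x + f y) \<and> (\<forall>c x. f (c *\<^sub>C x) = c *\<^sub>C f x)"

definition clinear_functional :: "('a::cvec \<Rightarrow> complex) \<Rightarrow> bool" where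
  "clinear_functional f \<longleftrightarrow> (\<forall>x y. f (x + y) = f x + f y) \<and> (\<forall>c x. f (c *\<^sub>C x) = c * f x)"

definition state :: "('a::star_algebra \<Rightarrow> complex) \<Rightarrow> bool" where
  "state \<mu> \<longleftrightarrow> clinear_functional \<mu> \<and>
     (\<forall>a. \<mu> (star a * a) \<in> \<real> \<and> Re (\<mu> (star a * a)) \<ge> 0) \<and> \<mu> 1 = 1"

definition faithful_state :: "('a::star_algebra \<Rightarrow> complex) \<Rightarrow> bool" where
  "faithful_state \<mu> \<longleftrightarrow> state \<mu> \<and> (\<forall>a. \<mu> (star a * a) = 0 \<longrightarrow> a = 0)"

definition star_aut :: "('a::star_algebra \<Rightarrow> 'a) \<Rightarrow> bool" where
  "star_aut f \<longleftrightarrow> bij f \<and> clinear f \<and> (\<forall>x y. f (x * y) = f x * f y)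
     \<and> (\<forall>x. f (star x) = star (f x)) \<and> f 1 = 1"

text \<open>Dynamical system (A, mu, alpha) over the group G.  The von Neumann algebra structure
  (sigma-finiteness, normality of mu) is not modelled.\<close>
definition dyn_sys :: "('g, 'c) monoid_scheme \<Rightarrow> ('g \<Rightarrow> 'a::star_algebra \<Rightarrow> 'a)
    \<Rightarrow> ('a \<Rightarrow> complex) \<Rightarrow> bool" where
  "dyn_sys G \<alpha> \<mu> \<longleftrightarrow> faithful_state \<mu>
     \<and> (\<forall>g\<in>carrier G. star_aut (\<alpha> g))
     \<and> \<alpha> \<one>\<^bsub>G\<^esub> = id
     \<and> (\<forall>g\<in>carrier G. \<forall>h\<in>carrier G. \<alpha> (g \<otimes>\<^bsub>G\<^esub> h) = \<alpha> g \<circ> \<alpha> h)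
     \<and> (\<forall>g\<in>carrier G. \<mu> \<circ> \<alpha> g = \<mu>)"

text \<open>An element of A \<odot> B is represented by a formal finite sum
  \<open>\<Sum>i. a_i \<otimes> b_i\<close>, given as a list of pairs.  Linear maps on A \<odot> B
  correspond (universal property) to bilinear maps on A \<times> B; a linear functional
  \<omega> on A \<odot> B is therefore given by the bilinear map \<open>\<phi> a b = \<omega>(a \<otimes> b)\<close>.\<close>

type_synonym ('a, 'b) tens = "('a \<times> 'b) list"

definition tens_mult :: "('a::times, 'b::times) tens \<Rightarrow> ('a, 'b) tens \<Rightarrow> ('a, 'b) tens" where
  "tens_mult s t = concat (map (\<lambda>(a, b). map (\<lambda>(c, d). (a * c, b * d)) t) s)"

definition tens_star :: "('a::star_algebra, 'b::star_algebra) tens \<Rightarrow> ('a, 'b) tens" where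
  "tens_star s = map (\<lambda>(a, b). (star a, star b)) s"

definition tens_map :: "('a \<Rightarrow> 'a) \<Rightarrow> ('b \<Rightarrow> 'b) \<Rightarrow> ('a, 'b) tens \<Rightarrow> ('a, 'b) tens" where
  "tens_map f g s = map (\<lambda>(a, b). (f a, g b)) s"

definition tens_ext :: "('a \<Rightarrow> 'b \<Rightarrow> 'c::comm_monoid_add) \<Rightarrow> ('a, 'b) tens \<Rightarrow> 'c" where
  "tens_ext \<phi> s = (\<Sum>(a, b)\<leftarrow>s. \<phi> a b)"

definition cbilinear :: "('a::cvec \<Rightarrow> 'b::cvec \<Rightarrow> 'c::cvec) \<Rightarrow> bool" where
  "cbilinear \<phi> \<longleftrightarrow> (\<forall>b. clinear (\<lambda>a. \<phi> a b)) \<and> (\<forall>a. clinear (\<lambda>b. \<phi> a b))"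

definition cbilinear_functional :: "('a::cvec \<Rightarrow> 'b::cvec \<Rightarrow> complex) \<Rightarrow> bool" where
  "cbilinear_functional \<phi> \<longleftrightarrow>
     (\<forall>b. clinear_functional (\<lambda>a. \<phi> a b)) \<and> (\<forall>a. clinear_functional (\<lambda>b. \<phi> a b))"

definition tens_state :: "('a::star_algebra \<Rightarrow> 'b::star_algebra \<Rightarrow> complex) \<Rightarrow> bool" where
  "tens_state \<phi> \<longleftrightarrow> cbilinear_functional \<phi>
     \<and> (\<forall>s. tens_ext \<phi> (tens_mult (tens_star s) s) \<in> \<real>
            \<and> Re (tens_ext \<phi> (tens_mult (tens_star s) s)) \<ge> 0)
     \<and> \<phi> 1 1 = 1"

definition joining :: "('g, 'c) monoid_scheme \<Rightarrow> ('g \<Rightarrow> 'a::star_algebra \<Rightarrow> 'a) \<Rightarrow> ('a \<Rightarrow> complex)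
    \<Rightarrow> ('g \<Rightarrow> 'b::star_algebra \<Rightarrow> 'b) \<Rightarrow> ('b \<Rightarrow> complex) \<Rightarrow> ('a \<Rightarrow> 'b \<Rightarrow> complex) \<Rightarrow> bool" where
  "joining G \<alpha> \<mu> \<beta> \<nu> \<phi> \<longleftrightarrow> tens_state \<phi>
     \<and> (\<forall>a. \<phi> a 1 = \<mu> a) \<and> (\<forall>b. \<phi> 1 b = \<nu> b)
     \<and> (\<forall>g\<in>carrier G. \<forall>s. tens_ext \<phi> (tens_map (\<alpha> g) (\<beta> g) s) = tens_ext \<phi> s)"

text \<open>\<open>(H, \<gamma>)\<close> is a GNS construction of \<omega>, where \<open>\<gamma> = tens_ext \<Gamma>\<close> and
  \<open>\<Gamma> a b = \<gamma>(a \<otimes> b)\<close>: \<gamma> is linear with dense range and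
  \<open>\<langle>\<gamma> s, \<gamma> t\<rangle> = \<omega>(s\<^sup>* t)\<close>.\<close>
definition is_GNS :: "('a::star_algebra \<Rightarrow> 'b::star_algebra \<Rightarrow> complex)
    \<Rightarrow> ('a \<Rightarrow> 'b \<Rightarrow> 'h::chilbert) \<Rightarrow> bool" where
  "is_GNS \<phi> \<Gamma> \<longleftrightarrow> cbilinear \<Gamma>
     \<and> (\<forall>s t. cinner (tens_ext \<Gamma> s) (tens_ext \<Gamma> t) = tens_ext \<phi> (tens_mult (tens_star s) t))
     \<and> closure (range (tens_ext \<Gamma>)) = UNIV"

definition orth_proj :: "'h::chilbert set \<Rightarrow> ('h \<Rightarrow> 'h) \<Rightarrow> bool" where
  "orth_proj S P \<longleftrightarrow> (\<forall>x. P x \<in> S \<and> (\<forall>y\<in>S. cinner y (x - P x) = 0))"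

end

theory Submission imports Defs begin

text \<open>Both sides of the equivalence reduce to the invariance \<open>\<omega>(\<alpha> g a \<otimes> \<beta> g b) = \<omega>(a \<otimes> b)\<close>
  on simple tensors, because \<open>\<langle>\<gamma>(1 \<otimes> star b), \<gamma>(a \<otimes> 1)\<rangle> = \<omega>(a \<otimes> b)\<close>.
  Since \<open>\<beta> g\<close> is a \<nu>-preserving *-automorphism, \<open>V g\<close> is an isometry of \<open>H\<nu>\<close> onto a dense
  subspace; hence \<open>P (U g x) = V g (P x)\<close> for all \<open>x \<in> H\<mu>\<close> iff \<open>\<langle>V g y, U g x\<rangle> = \<langle>y, x\<rangle>\<close>
  for \<open>x \<in> H\<mu>\<close>, \<open>y \<in> H\<nu>\<close>, and by continuity it suffices to check this on simple tensors.\<close>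

lemma star_one [simp]: "star (1::'a::star_algebra) = 1"
proof -
  have "star (1::'a) = star 1 * star (star 1)" by (simp add: star_star)
  also have "\<dots> = star (star 1 * 1)" by (simp only: star_mult)
  also have "\<dots> = 1" by (simp add: star_star)
  finally show ?thesis .
qed

lemma additive_diff:
  fixes f :: "'a::ab_group_add \<Rightarrow> 'b::ab_group_add"
  assumes "\<And>x y. f (x + y) = f x + f y"
  shows "f (x - y) = f x - f y"
  using assms[of "x - y" y] by (simp add: algebra_simps)

lemma cinner_add_left: "cinner (x + y) (z::'h::cinner_space) = cinner x z + cinner y z"
  by (metis cinner_commute cinner_add_right complex_cnj_add)

lemma cinner_scaleC_left: "cinner (c *\<^sub>C x) (y::'h::cinner_space) = cnj c * cinner x y"
  by (metis cinner_commute cinner_scaleC_right complex_cnj_mult complex_cnj_cnj)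

lemma cinner_diff_right: "cinner x (y - z) = cinner x y - cinner (x::'h::cinner_space) z"
  by (rule additive_diff) (rule cinner_add_right)

lemma cinner_diff_left: "cinner (x - y) z = cinner x z - cinner y (z::'h::cinner_space)"
  by (rule additive_diff[where f = "\<lambda>x. cinner x z"]) (rule cinner_add_left)

lemma cinner_self_eq_zeroD: "cinner (x::'h::cinner_space) x = 0 \<Longrightarrow> x = 0"
  using norm_cinner[of x] by simp

lemma power2_norm_eq_cinner: "(norm (x::'h::cinner_space))\<^sup>2 = Re (cinner x x)"
  using norm_cinner[of x] cinner_self_nonneg[of x] by simp

lemma cinner_polarization:
  fixes y z :: "'h::cinner_space"
  shows "cinner y z = Complex
    (((norm (y + z))\<^sup>2 - (norm y)\<^sup>2 - (norm z)\<^sup>2) / 2)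
    (((norm (\<i> *\<^sub>C y + z))\<^sup>2 - (norm (\<i> *\<^sub>C y))\<^sup>2 - (norm z)\<^sup>2) / 2)"
proof -
  have "Re (cinner z y) = Re (cinner y z)" by (subst cinner_commute) simp
  moreover have "Im (cinner y z) = Re (cinner (\<i> *\<^sub>C y) z)"
    by (simp add: cinner_scaleC_left)
  moreover have "Re (cinner (\<i> *\<^sub>C y) z) = Re (cinner z (\<i> *\<^sub>C y))"
    by (subst cinner_commute) simp
  ultimately show ?thesis
    by (simp add: complex_eq_iff power2_norm_eq_cinner cinner_add_left cinner_add_right)
qed

lemma continuous_on_cinner_right:
  "continuous_on S f \<Longrightarrow> continuous_on S (\<lambda>x. cinner y (f x :: 'h::cinner_space))"
  unfolding cinner_polarization[of y] by (intro continuous_intros) auto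

lemma continuous_on_cinner_left:
  assumes "continuous_on S f"
  shows "continuous_on S (\<lambda>x. cinner (f x :: 'h::cinner_space) y)"
proof -
  have "continuous_on S (\<lambda>x. cnj (cinner y (f x)))"
    by (intro continuous_intros continuous_on_cinner_right assms)
  then show ?thesis by (subst cinner_commute) simp
qed

lemma continuous_eq_on_closure:
  fixes f g :: "'a::topological_space \<Rightarrow> 'b::real_normed_vector"
  assumes "continuous_on (closure S) f" "continuous_on (closure S) g"
    and "\<And>x. x \<in> S \<Longrightarrow> f x = g x" and "x \<in> closure S"
  shows "f x = g x"
proof -
  have "f x - g x = 0"
    by (rule continuous_constant_on_closure[where f = "\<lambda>x. f x - g x"])
       (use assms in \<open>auto intro: continuous_on_diff\<close>)
  then show ?thesis by simp
qed

lemma cinner_eq_on_closure: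
  fixes f f' :: "'a::topological_space \<Rightarrow> 'h::cinner_space"
    and g g' :: "'b::topological_space \<Rightarrow> 'h"
  assumes f: "continuous_on (closure S) f" "continuous_on (closure S) f'"
    and g: "continuous_on (closure T) g" "continuous_on (closure T) g'"
    and eq: "\<And>y z. y \<in> S \<Longrightarrow> z \<in> T \<Longrightarrow> cinner (f y) (g z) = cinner (f' y) (g' z)"
    and "y \<in> closure S" "z \<in> closure T"
  shows "cinner (f y) (g z) = cinner (f' y) (g' z)"
proof -
  have "cinner (f y) (g z) = cinner (f' y) (g' z)" if "y \<in> S" for y
    by (rule continuous_eq_on_closure[OF continuous_on_cinner_right continuous_on_cinner_right,
          OF g _ \<open>z \<in> closure T\<close>])
       (use eq that in auto)
  then show ?thesis
    by (rule continuous_eq_on_closure[OF continuous_on_cinner_left continuous_on_cinner_left,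
          OF f _ \<open>y \<in> closure S\<close>])
qed

lemma orth_proj_in: "orth_proj S P \<Longrightarrow> P x \<in> S"
  by (simp add: orth_proj_def)

lemma orth_proj_cinner:
  assumes "orth_proj S P" "y \<in> S"
  shows "cinner y (P x) = cinner y x"
proof -
  have "cinner y (x - P x) = 0"
    using assms by (simp add: orth_proj_def)
  then show ?thesis by (simp add: cinner_diff_right)
qed

lemma orth_proj_unique:
  assumes P: "orth_proj S P" and "p \<in> S" and p: "\<And>y. y \<in> S \<Longrightarrow> cinner y p = cinner y x"
  shows "P x = p"
proof -
  have orth: "cinner y (P x - p) = 0" if "y \<in> S" for y
    using orth_proj_cinner[OF P that] p[OF that] by (simp add: cinner_diff_right)
  have "cinner (P x - p) (P x - p) = 0"
    using orth orth_proj_in[OF P] \<open>p \<in> S\<close> by (simp add: cinner_diff_left)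
  then have "P x - p = 0" by (rule cinner_self_eq_zeroD)
  then show ?thesis by simp
qed

lemma joining_iff_invariant_on_simple_tensors:
  assumes "tens_state \<phi>" "\<forall>a. \<phi> a 1 = \<mu> a" "\<forall>b. \<phi> 1 b = \<nu> b"
  shows "joining G \<alpha> \<mu> \<beta> \<nu> \<phi> \<longleftrightarrow> (\<forall>g\<in>carrier G. \<forall>a b. \<phi> (\<alpha> g a) (\<beta> g b) = \<phi> a b)"
proof -
  have "tens_ext \<phi> (tens_map f g s) = tens_ext \<phi> s" if "\<And>a b. \<phi> (f a) (g b) = \<phi> a b" for f g s
    using that by (induction s) (auto simp: tens_ext_def tens_map_def)
  moreover have "\<phi> (f a) (g b) = \<phi> a b" if "\<forall>s. tens_ext \<phi> (tens_map f g s) = tens_ext \<phi> s"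
    for f g a b
    using that[rule_format, of "[(a, b)]"] by (simp add: tens_ext_def tens_map_def)
  ultimately show ?thesis
    using assms unfolding joining_def by blast
qed

lemma GNS_cinner_simple:
  assumes "is_GNS \<phi> \<Gamma>"
  shows "cinner (\<Gamma> a b) (\<Gamma> c d) = \<phi> (star a * c) (star b * d)"
  using assms[unfolded is_GNS_def, THEN conjunct2, THEN conjunct1, rule_format, of "[(a, b)]" "[(c, d)]"]
  by (simp add: tens_ext_def tens_mult_def tens_star_def)

text \<open>One group element at a time: \<open>\<alpha>\<close>, \<open>\<beta>\<close>, \<open>U\<close>, \<open>V\<close> stand for \<open>\<alpha> g\<close>, \<open>\<beta> g\<close>, \<open>U g\<close>, \<open>V g\<close>.
  Nothing is required of \<open>\<alpha>\<close>: its compatibility with \<open>\<omega>\<close> is exactly what is being characterised.\<close>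

locale GNS_covariant_pair =
  fixes \<phi> :: "'a::star_algebra \<Rightarrow> 'b::star_algebra \<Rightarrow> complex"
    and \<Gamma> :: "'a \<Rightarrow> 'b \<Rightarrow> 'h::chilbert"
    and P :: "'h \<Rightarrow> 'h"
    and \<alpha> :: "'a \<Rightarrow> 'a" and \<beta> :: "'b \<Rightarrow> 'b"
    and U V :: "'h \<Rightarrow> 'h"
  assumes GNS: "is_GNS \<phi> \<Gamma>"
    and proj: "orth_proj (closure (range (\<lambda>b. \<Gamma> 1 b))) P"
    and star_aut: "star_aut \<beta>"
    and marginal_invariant: "\<And>b. \<phi> 1 (\<beta> b) = \<phi> 1 b"
    and U_cont: "continuous_on (closure (range (\<lambda>a. \<Gamma> a 1))) U"
    and U_simple: "\<And>a. U (\<Gamma> a 1) = \<Gamma> (\<alpha> a) 1"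
    and V_into: "\<And>y. y \<in> closure (range (\<lambda>b. \<Gamma> 1 b)) \<Longrightarrow> V y \<in> closure (range (\<lambda>b. \<Gamma> 1 b))"
    and V_cont: "continuous_on (closure (range (\<lambda>b. \<Gamma> 1 b))) V"
    and V_simple: "\<And>b. V (\<Gamma> 1 b) = \<Gamma> 1 (\<beta> b)"
begin

abbreviation "H\<^sub>\<mu> \<equiv> closure (range (\<lambda>a. \<Gamma> a 1))"
abbreviation "H\<^sub>\<nu> \<equiv> closure (range (\<lambda>b. \<Gamma> 1 b))"

lemma right_in_H\<^sub>\<nu>: "\<Gamma> 1 b \<in> H\<^sub>\<nu>"
  by (simp add: closure_subset[THEN subsetD])

lemma left_in_H\<^sub>\<mu>: "\<Gamma> a 1 \<in> H\<^sub>\<mu>"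
  by (simp add: closure_subset[THEN subsetD])

lemma cinner_right_left: "cinner (\<Gamma> 1 b) (\<Gamma> a 1) = \<phi> a (star b)"
  using GNS_cinner_simple[OF GNS, of 1 b a 1] by simp

lemma beta_star: "\<beta> (star b) = star (\<beta> b)"
  using star_aut by (simp add: star_aut_def)

lemma V_isometric:
  assumes "y \<in> H\<^sub>\<nu>" "z \<in> H\<^sub>\<nu>"
  shows "cinner (V y) (V z) = cinner y z"
proof -
  have simple: "cinner (V (\<Gamma> 1 c)) (V (\<Gamma> 1 d)) = cinner (\<Gamma> 1 c) (\<Gamma> 1 d)" for c d
  proof -
    have "star (\<beta> c) * \<beta> d = \<beta> (star c * d)"
      using star_aut by (simp add: star_aut_def)
    then show ?thesis
      by (simp add: V_simple GNS_cinner_simple[OF GNS] marginal_invariant)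
  qed
  show ?thesis
    by (rule cinner_eq_on_closure[where f' = id and g' = id, simplified, OF V_cont V_cont _ assms])
       (auto simp: simple)
qed

lemma right_in_V_image: "\<Gamma> 1 b \<in> V ` H\<^sub>\<nu>"
proof -
  obtain c where "b = \<beta> c"
    using star_aut by (metis star_aut_def bij_def surj_def)
  then show ?thesis
    using right_in_H\<^sub>\<nu> V_simple by (metis image_eqI)
qed

lemma invariant_if_intertwining:
  assumes "\<forall>x\<in>H\<^sub>\<mu>. P (U x) = V (P x)"
  shows "\<phi> (\<alpha> a) (\<beta> b) = \<phi> a b"
proof -
  have "\<phi> (\<alpha> a) (\<beta> b) = cinner (V (\<Gamma> 1 (star b))) (U (\<Gamma> a 1))"
    by (simp add: V_simple U_simple cinner_right_left beta_star star_star)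
  also have "\<dots> = cinner (V (\<Gamma> 1 (star b))) (P (U (\<Gamma> a 1)))"
    by (simp add: orth_proj_cinner[OF proj] V_into right_in_H\<^sub>\<nu>)
  also have "\<dots> = cinner (V (\<Gamma> 1 (star b))) (V (P (\<Gamma> a 1)))"
    using assms left_in_H\<^sub>\<mu> by simp
  also have "\<dots> = cinner (\<Gamma> 1 (star b)) (P (\<Gamma> a 1))"
    by (simp add: V_isometric right_in_H\<^sub>\<nu> orth_proj_in[OF proj])
  also have "\<dots> = \<phi> a b"
    by (simp add: orth_proj_cinner[OF proj] right_in_H\<^sub>\<nu> cinner_right_left star_star)
  finally show ?thesis .
qed

lemma intertwining_if_invariant:
  assumes invariant: "\<And>a b. \<phi> (\<alpha> a) (\<beta> b) = \<phi> a b" and x: "x \<in> H\<^sub>\<mu>"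
  shows "P (U x) = V (P x)"
proof (rule orth_proj_unique[OF proj V_into[OF orth_proj_in[OF proj]]])
  have simple: "cinner (V (\<Gamma> 1 b)) (U (\<Gamma> a 1)) = cinner (\<Gamma> 1 b) (\<Gamma> a 1)" for a b
    using invariant[of a "star b"] by (simp add: V_simple U_simple cinner_right_left beta_star)
  have cross: "cinner (V y) (U x) = cinner y x" if "y \<in> H\<^sub>\<nu>" for y
    by (rule cinner_eq_on_closure[where f' = id and g' = id, simplified, OF V_cont U_cont _ that x])
       (auto simp: simple)
  have "cinner y (V (P x)) = cinner y (U x)" if "y \<in> range (\<lambda>b. \<Gamma> 1 b)" for y
  proof -
    obtain y' where y': "y' \<in> H\<^sub>\<nu>" "y = V y'"
      using \<open>y \<in> range (\<lambda>b. \<Gamma> 1 b)\<close> right_in_V_image by blast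
    then show ?thesis
      by (simp add: V_isometric orth_proj_in[OF proj] orth_proj_cinner[OF proj] cross)
  qed
  then show "cinner y (V (P x)) = cinner y (U x)" if "y \<in> H\<^sub>\<nu>" for y
    by (rule continuous_eq_on_closure[OF continuous_on_cinner_left continuous_on_cinner_left,
          OF continuous_on_id continuous_on_id _ that])
qed

lemma intertwining_iff_invariant:
  "(\<forall>x\<in>H\<^sub>\<mu>. P (U x) = V (P x)) \<longleftrightarrow> (\<forall>a b. \<phi> (\<alpha> a) (\<beta> b) = \<phi> a b)"
  using invariant_if_intertwining intertwining_if_invariant by blast

end

theorem proposition2p4:
  fixes G :: "('g, 'c) monoid_scheme"
    and \<alpha> :: "'g \<Rightarrow> 'a::star_algebra \<Rightarrow> 'a" and \<mu> :: "'a \<Rightarrow> complex"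
    and \<beta> :: "'g \<Rightarrow> 'b::star_algebra \<Rightarrow> 'b" and \<nu> :: "'b \<Rightarrow> complex"
    and \<phi> :: "'a \<Rightarrow> 'b \<Rightarrow> complex"
    and \<Gamma> :: "'a \<Rightarrow> 'b \<Rightarrow> 'h::chilbert"
    and P :: "'h \<Rightarrow> 'h" and U V :: "'g \<Rightarrow> 'h \<Rightarrow> 'h"
  assumes "group G"
    and "dyn_sys G \<alpha> \<mu>" and "dyn_sys G \<beta> \<nu>"
    and "tens_state \<phi>"
    and "\<forall>a. \<phi> a 1 = \<mu> a" and "\<forall>b. \<phi> 1 b = \<nu> b"
    and "is_GNS \<phi> \<Gamma>"
    and "orth_proj (closure (range (\<lambda>b. \<Gamma> 1 b))) P"
    and "\<forall>g\<in>carrier G. (\<forall>x\<in>closure (range (\<lambda>a. \<Gamma> a 1)). U g x \<in> closure (range (\<lambda>a. \<Gamma> a 1)))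
           \<and> continuous_on (closure (range (\<lambda>a. \<Gamma> a 1))) (U g)
           \<and> (\<forall>a. U g (\<Gamma> a 1) = \<Gamma> (\<alpha> g a) 1)"
    and "\<forall>g\<in>carrier G. (\<forall>y\<in>closure (range (\<lambda>b. \<Gamma> 1 b)). V g y \<in> closure (range (\<lambda>b. \<Gamma> 1 b)))
           \<and> continuous_on (closure (range (\<lambda>b. \<Gamma> 1 b))) (V g)
           \<and> (\<forall>b. V g (\<Gamma> 1 b) = \<Gamma> 1 (\<beta> g b))"
  shows "joining G \<alpha> \<mu> \<beta> \<nu> \<phi> \<longleftrightarrow>
    (\<forall>g\<in>carrier G. \<forall>x\<in>closure (range (\<lambda>a. \<Gamma> a 1)). P (U g x) = V g (P x))"
proof -
  have pair: "GNS_covariant_pair \<phi> \<Gamma> P (\<alpha> g) (\<beta> g) (U g) (V g)" if g: "g \<in> carrier G" for g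
  proof
    show "star_aut (\<beta> g)" "\<phi> 1 (\<beta> g b) = \<phi> 1 b" for b
      using assms(3,6) g by (auto simp: dyn_sys_def fun_eq_iff)
  qed (use assms(7-10) g in auto)
  have "(\<forall>a b. \<phi> (\<alpha> g a) (\<beta> g b) = \<phi> a b)
      \<longleftrightarrow> (\<forall>x\<in>closure (range (\<lambda>a. \<Gamma> a 1)). P (U g x) = V g (P x))" if "g \<in> carrier G" for g
    using GNS_covariant_pair.intertwining_iff_invariant[OF pair[OF that]] by (rule sym)
  then show ?thesis
    unfolding joining_iff_invariant_on_simple_tensors[OF assms(4-6)] by (rule ball_cong[OF refl])
qed

end
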